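(* Let $\eta^0\in\{-1,0,1\}^{\mathbb{Z}}$ be an initial configuration and let $s_1<s_2$ be separators of $\eta^0$ such that no separator lies strictly between them. Let $I=\{s_1,\dots,s_2\}$ and consider the golf process $\eta[I]$ restricted to $I$. Then $\eta[I]$ is valid, and at time $1$ both $s_1$ and $s_2$ are free holes of $\eta[I]$.
   Context: State $1$ = ball, $-1$ = hole, $0$ = neutral. A vertex $v$ is a separator for $\eta^0$ if $\eta^0_v=-1$, $\sum_{j=k}^{v-1}\eta^0_j\le0$ for all $k<v$, and $\sum_{j=v+1}^{k}\eta^0_j\le0$ for all $k>v$. The golf process restricted to $I$ is the golf process on the path graph $I$ with initial configuration $(\eta^0_i)_{i\in I}$, clocks $(C(i))_{i\in I}$ i.i.d. uniform on $[0,1]$, and a transition matrix equal to that of the random walk with steps $+1$ w.p. $p$ and $-1$ w.p. $1-p$ at interior points of $I$ and reflected at the endpoints: at time $C(v)$, a ball at $v$ performs this walk from $v$, stopped at the first hole that is free at that time, which it fills (both vertices becoming neutral); if it never finds one the process is frozen. The process is valid if it is a.s. well-defined and not frozen at time $1$, measurable, and a.s. càdlàg as a function $[0,1]\to\{-1,0,1,\ast\}^I$. *)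

theory Defs
  imports "HOL-Probability.Probability"
begin

text \<open>Separator of an initial configuration eta0 (values -1 hole, 0 neutral, 1 ball).\<close>
definition separator :: "(int \<Rightarrow> int) \<Rightarrow> int \<Rightarrow> bool" where
  "separator \<eta> v \<longleftrightarrow> \<eta> v = -1
     \<and> (\<forall>k<v. (\<Sum>j\<in>{k..v-1}. \<eta> j) \<le> 0)
     \<and> (\<forall>k>v. (\<Sum>j\<in>{v+1..k}. \<eta> j) \<le> 0)"

definition walk_step :: "int \<Rightarrow> int \<Rightarrow> bool \<Rightarrow> int \<Rightarrow> int" where
  "walk_step a b up x =
     (if x = a then a + 1 else if x = b then b - 1 else if up then x + 1 else x - 1)"

fun walk :: "int \<Rightarrow> int \<Rightarrow> (nat \<Rightarrow> bool) \<Rightarrow> int \<Rightarrow> nat \<Rightarrow> int" where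
  "walk a b \<xi> v 0 = v"
| "walk a b \<xi> v (Suc n) = walk_step a b (\<xi> n) (walk a b \<xi> v n)"

definition ball_move :: "int \<Rightarrow> int \<Rightarrow> (nat \<Rightarrow> bool) \<Rightarrow> int \<Rightarrow> (int \<Rightarrow> int) \<Rightarrow> (int \<Rightarrow> int) option" where
  "ball_move a b \<xi> v \<eta> =
     (if \<exists>n. \<eta> (walk a b \<xi> v n) = -1
      then (let h = walk a b \<xi> v (LEAST n. \<eta> (walk a b \<xi> v n) = -1)
            in Some (\<eta>(v := 0, h := 0)))
      else None)"

text \<open>Golf process restricted to I = {a..b}; omega = (clocks, step sequences of the walks
  started from each vertex). Value None encodes the state * (frozen / not well-defined,
  e.g. tied clocks).\<close>
definition golf_restricted ::
  "(int \<Rightarrow> int) \<Rightarrow> int \<Rightarrow> int \<Rightarrow> (int \<Rightarrow> real) \<times> (int \<Rightarrow> nat \<Rightarrow> bool) \<Rightarrow> real \<Rightarrow> (int \<Rightarrow> int) option" where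
  "golf_restricted \<eta>0 a b \<omega> t =
     (let C = fst \<omega>; W = snd \<omega>; B = {v \<in> {a..b}. \<eta>0 v = 1} in
      if inj_on C B
      then fold (\<lambda>v acc. Option.bind acc (ball_move a b (W v) v))
                (sort_key C (sorted_list_of_set {v \<in> B. C v \<le> t}))
                (Some (\<lambda>i. if i \<in> {a..b} then \<eta>0 i else 0))
      else None)"

definition golf_measure :: "int \<Rightarrow> int \<Rightarrow> real \<Rightarrow> ((int \<Rightarrow> real) \<times> (int \<Rightarrow> nat \<Rightarrow> bool)) measure" where
  "golf_measure a b p =
     (PiM {a..b} (\<lambda>_. uniform_measure lborel {0..1::real}))
     \<Otimes>\<^sub>M (PiM {a..b} (\<lambda>_. PiM (UNIV :: nat set) (\<lambda>_. measure_pmf (bernoulli_pmf p))))"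

definition cadlag_discrete :: "(real \<Rightarrow> 'a) \<Rightarrow> bool" where
  "cadlag_discrete f \<longleftrightarrow>
     (\<forall>t\<in>{0..<1}. \<exists>e>0. \<forall>s. t \<le> s \<and> s < t + e \<and> s \<le> 1 \<longrightarrow> f s = f t)
   \<and> (\<forall>t\<in>{0<..1}. \<exists>e>0. \<exists>y. \<forall>s. t - e < s \<and> s < t \<and> 0 \<le> s \<longrightarrow> f s = y)"

definition golf_valid :: "(int \<Rightarrow> int) \<Rightarrow> int \<Rightarrow> int \<Rightarrow> real \<Rightarrow> bool" where
  "golf_valid \<eta>0 a b p \<longleftrightarrow>
     (AE \<omega> in golf_measure a b p. \<forall>t\<in>{0..1}. golf_restricted \<eta>0 a b \<omega> t \<noteq> None)
   \<and> (\<forall>t\<in>{0..1}. \<forall>i\<in>{a..b}.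
        (\<lambda>\<omega>. map_option (\<lambda>\<eta>. \<eta> i) (golf_restricted \<eta>0 a b \<omega> t))
          \<in> measurable (golf_measure a b p) (count_space UNIV))
   \<and> (AE \<omega> in golf_measure a b p. cadlag_discrete (golf_restricted \<eta>0 a b \<omega>))"

end

theory Submission
  imports Defs
begin

text \<open>Call a configuration on \<open>{a..b}\<close> end-separated if \<open>a\<close> and \<open>b\<close> are holes and every
  block of sites touching one end but not the other has nonpositive sum (at least as many holes as
  balls). By the separator property the initial configuration is end-separated. A fired ball at
  \<open>u\<close> walks by unit steps to the first free hole \<open>h\<close>, so no site strictly between \<open>u\<close> and
  \<open>h\<close> is a hole; if \<open>h\<close> were an end, the block from \<open>u\<close> to that end would have positive
  sum. Hence the ends are never filled, and removing the ball and the hole keeps the configuration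
  end-separated. Almost surely the clocks are distinct and every walk eventually makes \<open>b - a\<close>
  consecutive steps in one direction of positive probability, which drives it to an end, a free
  hole; so the process is defined at all times. It changes only at the finitely many clock times,
  which gives cadlag paths, and it depends on the clocks only through their relative order, which
  gives measurability.\<close>

section \<open>Ends that stay separators\<close>

lemma sum_fun_upd:
  fixes g :: "'a \<Rightarrow> 'b::ab_group_add"
  assumes "finite A"
  shows "sum (g(x := c)) A = sum g A + (if x \<in> A then c - g x else 0)"
proof -
  have "g(x := c) = (\<lambda>i. g i + (if i = x then c - g x else 0))" by auto
  then show ?thesis using assms by (simp add: sum.distrib)
qed

lemma sum_int_interval_split:
  fixes f :: "int \<Rightarrow> 'a::comm_monoid_add"
  assumes "l \<le> m" "m \<le> r + 1"
  shows "sum f {l..r} = sum f {l..m-1} + sum f {m..r}"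
proof -
  have "{l..r} = {l..m-1} \<union> {m..r}" using assms by auto
  then show ?thesis by (simp add: sum.union_disjoint)
qed

lemma sum_int_interval_reflect:
  fixes f :: "int \<Rightarrow> 'a::comm_monoid_add"
  shows "(\<Sum>i\<in>{l..r}. f (c - i)) = (\<Sum>i\<in>{c-r..c-l}. f i)"
  by (rule sum.reindex_bij_witness[of _ "\<lambda>i. c - i" "\<lambda>i. c - i"]) auto

definition end_separated :: "int \<Rightarrow> int \<Rightarrow> (int \<Rightarrow> int) \<Rightarrow> bool" where
  "end_separated a b y \<longleftrightarrow> y a = -1 \<and> y b = -1 \<and> (\<forall>i. -1 \<le> y i)
     \<and> (\<forall>k<b. sum y {a+1..k} \<le> 0) \<and> (\<forall>k>a. sum y {k..b-1} \<le> 0)"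

lemma end_separated_reflect:
  assumes "end_separated a b y"
  shows "end_separated a b (\<lambda>i. y (a + b - i))"
proof -
  from assms have prefix: "\<And>k. k < b \<Longrightarrow> sum y {a+1..k} \<le> 0"
    and suffix: "\<And>k. a < k \<Longrightarrow> sum y {k..b-1} \<le> 0"
    unfolding end_separated_def by auto
  have "sum (\<lambda>i. y (a + b - i)) {a+1..k} = sum y {a+b-k..b-1}" for k
    by (simp add: sum_int_interval_reflect)
  moreover have "sum (\<lambda>i. y (a + b - i)) {k..b-1} = sum y {a+1..a+b-k}" for k
    by (simp add: sum_int_interval_reflect)
  ultimately show ?thesis
    using assms prefix[of "a + b - _"] suffix[of "a + b - _"] by (auto simp: end_separated_def)
qed

lemma end_separated_move_right:
  assumes sep: "end_separated a b y" and uh: "a \<le> u" "u < h" "h \<le> b"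
    and yu: "y u = 1" and yh: "y h = -1" and between: "\<And>j. u < j \<Longrightarrow> j < h \<Longrightarrow> y j \<noteq> -1"
  shows "h < b \<and> end_separated a b (y(u := 0, h := 0))"
proof -
  from sep have ya: "y a = -1" and yb: "y b = -1" and ge: "\<And>i. -1 \<le> y i"
    and prefix: "\<And>k. k < b \<Longrightarrow> sum y {a+1..k} \<le> 0"
    and suffix: "\<And>k. a < k \<Longrightarrow> sum y {k..b-1} \<le> 0"
    unfolding end_separated_def by auto
  have au: "a < u" using uh yu ya by (cases "a = u") auto
  have ball_run: "1 \<le> sum y {u..k-1}" if "u < k" "k \<le> h" for k
  proof -
    have "0 \<le> sum y {u+1..k-1}"
    proof (rule sum_nonneg)
      fix j assume "j \<in> {u+1..k-1}"
      then have "y j \<noteq> -1" using between that by simp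
      then show "0 \<le> y j" using ge[of j] by simp
    qed
    then show ?thesis using sum_int_interval_split[of u "u+1" "k-1" y] that yu by simp
  qed
  have hb: "h < b"
  proof (rule ccontr)
    assume "\<not> h < b"
    then have "1 \<le> sum y {u..b-1}" using ball_run[of b] uh by simp
    then show False using suffix[of u] au by simp
  qed
  have upd: "sum (y(u := 0, h := 0)) A = sum y A - (if u \<in> A then 1 else 0) + (if h \<in> A then 1 else 0)"
    if "finite A" for A
  proof -
    have "sum (y(u := 0, h := 0)) A = sum (y(u := 0)) A + (if h \<in> A then 0 - (y(u := 0)) h else 0)"
      by (rule sum_fun_upd[OF that])
    moreover have "sum (y(u := 0)) A = sum y A + (if u \<in> A then 0 - y u else 0)"
      by (rule sum_fun_upd[OF that])
    moreover have "(y(u := 0)) h = -1" using uh yh by simp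
    ultimately show ?thesis using yu by (simp del: fun_upd_apply)
  qed
  show ?thesis unfolding end_separated_def
  proof (intro conjI allI impI)
    show "(y(u := 0, h := 0)) a = -1" "(y(u := 0, h := 0)) b = -1"
      using ya yb au uh hb by auto
    show "-1 \<le> (y(u := 0, h := 0)) i" for i using ge[of i] by auto
    show "sum (y(u := 0, h := 0)) {a+1..k} \<le> 0" if "k < b" for k
      using upd[of "{a+1..k}"] prefix[OF that] uh au by auto
    show "sum (y(u := 0, h := 0)) {k..b-1} \<le> 0" if "a < k" for k
    proof (cases "u < k \<and> k \<le> h")
      case True
      then have "sum y {k..b-1} \<le> -1"
        using sum_int_interval_split[of u k "b-1" y] ball_run[of k] suffix[of u] au hb by simp
      then show ?thesis using upd[of "{k..b-1}"] True hb by auto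
    next
      case False
      then show ?thesis using upd[of "{k..b-1}"] suffix[OF that] uh hb by auto
    qed
  qed (fact hb)
qed

lemma end_separated_move:
  assumes sep: "end_separated a b y" and uh: "u \<in> {a..b}" "h \<in> {a..b}"
    and yu: "y u = 1" and yh: "y h = -1"
    and between: "\<And>j. min u h < j \<Longrightarrow> j < max u h \<Longrightarrow> y j \<noteq> -1"
  shows "a < h \<and> h < b \<and> end_separated a b (y(u := 0, h := 0))"
proof (cases "u < h")
  case True
  then show ?thesis
    using end_separated_move_right[OF sep _ True _ yu yh] uh between by auto
next
  case False
  then have hu: "h < u" using yu yh by (cases "h = u") auto
  let ?y = "\<lambda>i. y (a + b - i)"
  have "a + b - h < b \<and> end_separated a b (?y(a + b - u := 0, a + b - h := 0))"
    using uh hu yu yh between[of "a + b - _"]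
    by (intro end_separated_move_right[OF end_separated_reflect[OF sep]]) auto
  moreover have "(\<lambda>i. (?y(a + b - u := 0, a + b - h := 0)) (a + b - i)) = y(u := 0, h := 0)"
    by auto
  ultimately show ?thesis
    using end_separated_reflect[of a b "?y(a + b - u := 0, a + b - h := 0)"] hu uh by auto
qed

section \<open>Walks on an interval\<close>

lemma walk_in_interval:
  assumes "a < b" "x \<in> {a..b}"
  shows "walk a b \<xi> x n \<in> {a..b}"
  using assms by (induction n) (auto simp: walk_step_def)

lemma walk_Suc_dist:
  assumes "a < b" "x \<in> {a..b}"
  shows "\<bar>walk a b \<xi> x (Suc n) - walk a b \<xi> x n\<bar> = 1"
  using walk_in_interval[OF assms, of \<xi> n] assms by (auto simp: walk_step_def)

lemma walk_reflect:
  assumes "a < b"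
  shows "walk a b (\<lambda>n. \<not> \<xi> n) (a + b - x) n = a + b - walk a b \<xi> x n"
  using assms by (induction n) (auto simp: walk_step_def)

lemma walk_reaches_right_end:
  assumes ab: "a < b" and x: "x \<in> {a..b}" and run: "\<forall>j<N. \<xi> (m + j)" and N: "b - a \<le> int N"
  shows "\<exists>n. walk a b \<xi> x n = b"
proof (rule ccontr)
  assume never: "\<not> ?thesis"
  have climb: "walk a b \<xi> x m + int i \<le> walk a b \<xi> x (m + i)" if "i \<le> N" for i
    using that
  proof (induction i)
    case (Suc i)
    have "walk a b \<xi> x (m + i) \<in> {a..b}" "walk a b \<xi> x (m + i) \<noteq> b" "\<xi> (m + i)"
      using walk_in_interval[OF ab x] never run Suc.prems by auto
    then have "walk a b \<xi> x (m + Suc i) = walk a b \<xi> x (m + i) + 1"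
      by (auto simp: walk_step_def)
    then show ?case using Suc by simp
  qed simp
  have "b \<le> walk a b \<xi> x (m + N)"
    using climb[of N] walk_in_interval[OF ab x, of \<xi> m] N by simp
  then show False using walk_in_interval[OF ab x, of \<xi> "m + N"] never by force
qed

definition has_run :: "nat \<Rightarrow> 'a \<Rightarrow> (nat \<Rightarrow> 'a) \<Rightarrow> bool" where
  "has_run N c \<xi> \<longleftrightarrow> (\<exists>m. \<forall>j<N. \<xi> (m + j) = c)"

lemma walk_reaches_end:
  assumes ab: "a < b" and x: "x \<in> {a..b}" and run: "has_run (nat (b - a)) c \<xi>"
  shows "\<exists>n. walk a b \<xi> x n \<in> {a, b}"
proof -
  obtain m where m: "\<forall>j<nat (b - a). \<xi> (m + j) = c" using run unfolding has_run_def by blast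
  show ?thesis
  proof (cases c)
    case True
    then show ?thesis using walk_reaches_right_end[OF ab x, of "nat (b - a)" \<xi> m] m ab by auto
  next
    case False
    have "a + b - x \<in> {a..b}" using x by auto
    then obtain n where "walk a b (\<lambda>n. \<not> \<xi> n) (a + b - x) n = b"
      using walk_reaches_right_end[OF ab, of "a + b - x" "nat (b - a)" "\<lambda>n. \<not> \<xi> n" m] m False
      by auto
    then have "walk a b \<xi> x n = a" unfolding walk_reflect[OF ab] by simp
    then show ?thesis by blast
  qed
qed

section \<open>Firing the balls\<close>

lemma ball_move_first_hole:
  assumes ab: "a < b" and u: "u \<in> {a..b}" and ex: "\<exists>n. y (walk a b \<xi> u n) = -1"
  obtains h where "ball_move a b \<xi> u y = Some (y(u := 0, h := 0))" "h \<in> {a..b}" "y h = -1"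
    "\<And>j. min u h < j \<Longrightarrow> j < max u h \<Longrightarrow> y j \<noteq> -1"
proof -
  let ?w = "walk a b \<xi> u"
  define n0 where "n0 = (LEAST n. y (?w n) = -1)"
  have hole: "y (?w n0) = -1" unfolding n0_def using LeastI_ex[OF ex] .
  have move: "ball_move a b \<xi> u y = Some (y(u := 0, ?w n0 := 0))"
    unfolding ball_move_def n0_def using ex by (simp add: Let_def)
  have up: "\<forall>i<n0. \<bar>?w (i + 1) - ?w i\<bar> \<le> 1" and down: "\<forall>i<n0. \<bar>- ?w (i + 1) - - ?w i\<bar> \<le> 1"
    using walk_Suc_dist[OF ab u, of \<xi>] by (simp_all add: abs_minus_commute)
  have between: "y j \<noteq> -1" if j: "min u (?w n0) < j" "j < max u (?w n0)" for j
  proof -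
    have "\<exists>m\<le>n0. ?w m = j"
    proof (cases "u < ?w n0")
      case True
      then show ?thesis using nat0_intermed_int_val[OF up, of j] j by simp
    next
      case False
      then have "\<exists>m\<le>n0. - ?w m = - j" using nat0_intermed_int_val[OF down, of "- j"] j by simp
      then show ?thesis by simp
    qed
    then obtain m where m: "m \<le> n0" "?w m = j" by blast
    with j have "m < n0" by (cases "m = n0") auto
    then show ?thesis using m(2) not_less_Least unfolding n0_def by blast
  qed
  show thesis by (rule that[OF move walk_in_interval[OF ab u] hole between])
qed

lemma fold_ball_moves_end_separated:
  assumes ab: "a < b"
  shows "distinct L \<Longrightarrow> end_separated a b y
    \<Longrightarrow> \<forall>v\<in>set L. y v = 1 \<and> v \<in> {a..b} \<and> (\<exists>n. walk a b (W v) v n \<in> {a, b})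
    \<Longrightarrow> \<exists>y'. fold (\<lambda>v acc. Option.bind acc (ball_move a b (W v) v)) L (Some y) = Some y'
              \<and> end_separated a b y'"
proof (induction L arbitrary: y)
  case (Cons v L)
  then have v: "v \<in> {a..b}" "y v = 1" by auto
  have ends: "y a = -1" "y b = -1" using Cons.prems(2) by (simp_all add: end_separated_def)
  obtain n where "walk a b (W v) v n \<in> {a, b}" using Cons.prems(3) by auto
  then have "y (walk a b (W v) v n) = -1" using ends by auto
  then have "\<exists>n. y (walk a b (W v) v n) = -1" by blast
  then obtain h where h: "ball_move a b (W v) v y = Some (y(v := 0, h := 0))" "h \<in> {a..b}"
      "y h = -1" "\<And>j. min v h < j \<Longrightarrow> j < max v h \<Longrightarrow> y j \<noteq> -1"
    by (rule ball_move_first_hole[OF ab v(1)]) (rule that)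
  have "\<exists>y'. fold (\<lambda>v acc. Option.bind acc (ball_move a b (W v) v)) L (Some (y(v := 0, h := 0))) = Some y'
      \<and> end_separated a b y'"
  proof (rule Cons.IH)
    show "distinct L" using Cons.prems(1) by simp
    show "end_separated a b (y(v := 0, h := 0))"
      using end_separated_move[OF Cons.prems(2) v(1) h(2) v(2) h(3,4)] by blast
    show "\<forall>w\<in>set L. (y(v := 0, h := 0)) w = 1 \<and> w \<in> {a..b} \<and> (\<exists>n. walk a b (W w) w n \<in> {a, b})"
    proof
      fix w assume "w \<in> set L"
      moreover have "w \<noteq> v" using \<open>w \<in> set L\<close> Cons.prems(1) by auto
      ultimately show "(y(v := 0, h := 0)) w = 1 \<and> w \<in> {a..b} \<and> (\<exists>n. walk a b (W w) w n \<in> {a, b})"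
        using Cons.prems(3) h(3) by auto
    qed
  qed
  moreover have "fold (\<lambda>v acc. Option.bind acc (ball_move a b (W v) v)) (v # L) (Some y)
      = fold (\<lambda>v acc. Option.bind acc (ball_move a b (W v) v)) L (Some (y(v := 0, h := 0)))"
    using h(1) by (simp del: fun_upd_apply)
  ultimately show ?case by (simp only:)
qed simp

lemma end_separated_initial:
  assumes vals: "\<forall>i. \<eta>0 i \<in> {-1, 0, 1}" and sep: "separator \<eta>0 a" "separator \<eta>0 b" and ab: "a < b"
  shows "end_separated a b (\<lambda>i. if i \<in> {a..b} then \<eta>0 i else 0)"
proof -
  let ?y = "\<lambda>i. if i \<in> {a..b} then \<eta>0 i else 0"
  have restrict: "sum ?y {l..r} = sum \<eta>0 {l..r}" if "a \<le> l" "r \<le> b" for l r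
    using that by (intro sum.cong) auto
  have "sum \<eta>0 {a+1..k} \<le> 0" for k
    using sep(1) by (cases "a < k") (auto simp: separator_def)
  moreover have "sum \<eta>0 {k..b-1} \<le> 0" for k
    using sep(2) by (cases "k < b") (auto simp: separator_def)
  moreover have "-1 \<le> ?y i" for i
    using vals by (auto dest: spec[of _ i])
  ultimately show ?thesis
    using sep ab by (auto simp: end_separated_def separator_def restrict)
qed

lemma golf_restricted_end_separated:
  assumes vals: "\<forall>i. \<eta>0 i \<in> {-1, 0, 1}" and sep: "separator \<eta>0 a" "separator \<eta>0 b" and ab: "a < b"
    and inj: "inj_on (fst \<omega>) {v \<in> {a..b}. \<eta>0 v = 1}"
    and reach: "\<And>v. v \<in> {a..b} \<Longrightarrow> \<eta>0 v = 1 \<Longrightarrow> \<exists>n. walk a b (snd \<omega> v) v n \<in> {a, b}"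
  shows "\<exists>y. golf_restricted \<eta>0 a b \<omega> t = Some y \<and> end_separated a b y"
proof -
  let ?X = "{v \<in> {v \<in> {a..b}. \<eta>0 v = 1}. fst \<omega> v \<le> t}"
  let ?L = "sort_key (fst \<omega>) (sorted_list_of_set ?X)"
  have fin: "finite ?X" by (rule finite_subset[of _ "{a..b}"]) auto
  have "\<exists>y. fold (\<lambda>v acc. Option.bind acc (ball_move a b (snd \<omega> v) v)) ?L
      (Some (\<lambda>i. if i \<in> {a..b} then \<eta>0 i else 0)) = Some y \<and> end_separated a b y"
  proof (rule fold_ball_moves_end_separated[OF ab _ end_separated_initial[OF vals sep ab]])
    show "distinct ?L" using fin by simp
    have "(if v \<in> {a..b} then \<eta>0 v else 0) = 1 \<and> v \<in> {a..b} \<and> (\<exists>n. walk a b (snd \<omega> v) v n \<in> {a, b})"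
      if "v \<in> ?X" for v
      using that reach[of v] by simp
    then show "\<forall>v\<in>set ?L. (if v \<in> {a..b} then \<eta>0 v else 0) = 1 \<and> v \<in> {a..b}
        \<and> (\<exists>n. walk a b (snd \<omega> v) v n \<in> {a, b})"
      using fin by simp
  qed
  then show ?thesis using inj unfolding golf_restricted_def Let_def by simp
qed

definition golf_after_firing ::
  "(int \<Rightarrow> int) \<Rightarrow> int \<Rightarrow> int \<Rightarrow> (int \<Rightarrow> real) \<times> (int \<Rightarrow> nat \<Rightarrow> bool) \<Rightarrow> int set
    \<Rightarrow> (int \<Rightarrow> int) option" where
  "golf_after_firing \<eta>0 a b \<omega> X =
     (if inj_on (fst \<omega>) {v \<in> {a..b}. \<eta>0 v = 1}
      then fold (\<lambda>v acc. Option.bind acc (ball_move a b (snd \<omega> v) v))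
                (sort_key (fst \<omega>) (sorted_list_of_set X))
                (Some (\<lambda>i. if i \<in> {a..b} then \<eta>0 i else 0))
      else None)"

lemma golf_restricted_eq_after_firing:
  "golf_restricted \<eta>0 a b \<omega> t = golf_after_firing \<eta>0 a b \<omega> {v \<in> {v \<in> {a..b}. \<eta>0 v = 1}. fst \<omega> v \<le> t}"
  unfolding golf_restricted_def golf_after_firing_def Let_def by (rule refl)

lemma eventually_at_right_threshold_set:
  fixes C :: "'a \<Rightarrow> real"
  assumes "finite B"
  shows "eventually (\<lambda>s. {v \<in> B. C v \<le> s} = {v \<in> B. C v \<le> t}) (at_right t)"
proof -
  have "eventually (\<lambda>s. C v \<le> s \<longleftrightarrow> C v \<le> t) (at_right t)" for v
  proof (cases "C v \<le> t")
    case True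
    then show ?thesis by (intro eventually_at_rightI[of t "t + 1"]) auto
  next
    case False
    then show ?thesis by (intro eventually_at_rightI[of t "C v"]) auto
  qed
  then have "eventually (\<lambda>s. \<forall>v\<in>B. C v \<le> s \<longleftrightarrow> C v \<le> t) (at_right t)"
    using assms by (intro eventually_ball_finite) auto
  then show ?thesis by eventually_elim blast
qed

lemma eventually_at_left_threshold_set:
  fixes C :: "'a \<Rightarrow> real"
  assumes "finite B"
  shows "eventually (\<lambda>s. {v \<in> B. C v \<le> s} = {v \<in> B. C v < t}) (at_left t)"
proof -
  have "eventually (\<lambda>s. C v \<le> s \<longleftrightarrow> C v < t) (at_left t)" for v
  proof (cases "C v < t")
    case True
    then show ?thesis by (intro eventually_at_leftI[of "C v" t]) auto
  next
    case False
    then show ?thesis by (intro eventually_at_leftI[of "t - 1" t]) auto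
  qed
  then have "eventually (\<lambda>s. \<forall>v\<in>B. C v \<le> s \<longleftrightarrow> C v < t) (at_left t)"
    using assms by (intro eventually_ball_finite) auto
  then show ?thesis by eventually_elim blast
qed

lemma cadlag_golf_restricted: "cadlag_discrete (golf_restricted \<eta>0 a b \<omega>)"
proof -
  let ?B = "{v \<in> {a..b}. \<eta>0 v = 1}"
  let ?f = "golf_restricted \<eta>0 a b \<omega>"
  have fin: "finite ?B" by (rule finite_subset[of _ "{a..b}"]) auto
  have right: "\<exists>e>0. \<forall>s. t \<le> s \<and> s < t + e \<and> s \<le> 1 \<longrightarrow> ?f s = ?f t" for t
  proof -
    obtain c where c: "t < c" "\<And>s. t < s \<Longrightarrow> s < c \<Longrightarrow> {v \<in> ?B. fst \<omega> v \<le> s} = {v \<in> ?B. fst \<omega> v \<le> t}"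
      using eventually_at_right_threshold_set[OF fin, of "fst \<omega>" t]
      unfolding eventually_at_right_field by blast
    have const: "?f s = ?f t" if "t \<le> s" "s < c" for s
    proof (cases "s = t")
      case False
      then have "{v \<in> ?B. fst \<omega> v \<le> s} = {v \<in> ?B. fst \<omega> v \<le> t}"
        by (intro c(2)) (use that in auto)
      then show ?thesis unfolding golf_restricted_eq_after_firing by (rule arg_cong)
    qed simp
    show ?thesis
    proof (intro exI conjI allI impI)
      show "0 < c - t" using c(1) by simp
      show "?f s = ?f t" if "t \<le> s \<and> s < t + (c - t) \<and> s \<le> 1" for s
        using that by (intro const) auto
    qed
  qed
  have left: "\<exists>e>0. \<exists>y. \<forall>s. t - e < s \<and> s < t \<and> 0 \<le> s \<longrightarrow> ?f s = y" for t
  proof -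
    obtain c where c: "c < t" "\<And>s. c < s \<Longrightarrow> s < t \<Longrightarrow> {v \<in> ?B. fst \<omega> v \<le> s} = {v \<in> ?B. fst \<omega> v < t}"
      using eventually_at_left_threshold_set[OF fin, of "fst \<omega>" t]
      unfolding eventually_at_left_field by blast
    have const: "?f s = golf_after_firing \<eta>0 a b \<omega> {v \<in> ?B. fst \<omega> v < t}" if "c < s" "s < t" for s
      unfolding golf_restricted_eq_after_firing using c(2)[OF that] by (rule arg_cong)
    show ?thesis
    proof (intro exI conjI allI impI)
      show "0 < t - c" using c(1) by simp
      show "?f s = golf_after_firing \<eta>0 a b \<omega> {v \<in> ?B. fst \<omega> v < t}"
        if "t - (t - c) < s \<and> s < t \<and> 0 \<le> s" for s
        using that by (intro const) auto
    qed
  qed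
  show ?thesis unfolding cadlag_discrete_def using right left by blast
qed

section \<open>Measurability\<close>

lemma measurable_walk [measurable]:
  assumes [measurable]: "\<And>n. (\<lambda>x. \<xi> x n) \<in> measurable M (count_space UNIV)"
  shows "(\<lambda>x. walk a b (\<xi> x) v n) \<in> measurable M (count_space UNIV)"
proof (induction n)
  case (Suc n)
  have "(\<lambda>x. walk_step a b (\<xi> x n) i) \<in> measurable M (count_space UNIV)" for i
    by (rule measurable_compose_countable[where f="\<lambda>c x. walk_step a b c i"]) simp_all
  then show ?case
    using measurable_compose_countable[where f="\<lambda>i x. walk_step a b (\<xi> x n) i", OF _ Suc] by simp
qed simp

lemma fold_ball_moves_None:
  "fold (\<lambda>v acc. Option.bind acc (ball_move a b (W v) v)) L None = None"
  by (induction L) simp_all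

lemma measurable_fold_ball_moves:
  assumes [measurable]: "\<And>v n. (\<lambda>x. W x v n) \<in> measurable M (count_space UNIV)"
  shows "(\<lambda>x. fold (\<lambda>v acc. Option.bind acc (ball_move a b (W x v) v)) L (Some y))
    \<in> measurable M (count_space UNIV)"
proof (induction L arbitrary: y)
  case (Cons v L)
  let ?w = "\<lambda>x n. walk a b (W x v) v n"
  let ?hole = "\<lambda>x. ?w x (LEAST n. y (?w x n) = -1)"
  have eq: "fold (\<lambda>v acc. Option.bind acc (ball_move a b (W x v) v)) (v # L) (Some y) =
    (if \<exists>n. y (?w x n) = -1
     then fold (\<lambda>v acc. Option.bind acc (ball_move a b (W x v) v)) L (Some (y(v := 0, ?hole x := 0)))
     else None)" for x
    by (simp add: ball_move_def Let_def fold_ball_moves_None)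
  have [measurable]: "?hole \<in> measurable M (count_space UNIV)"
    by (rule measurable_compose_countable[where f="\<lambda>n x. ?w x n"]) measurable
  have [measurable]: "(\<lambda>x. fold (\<lambda>v acc. Option.bind acc (ball_move a b (W x v) v)) L
      (Some (y(v := 0, ?hole x := 0)))) \<in> measurable M (count_space UNIV)"
    by (rule measurable_compose_countable[where
          f="\<lambda>h x. fold (\<lambda>v acc. Option.bind acc (ball_move a b (W x v) v)) L (Some (y(v := 0, h := 0)))"])
       (simp_all add: Cons.IH)
  show ?case unfolding eq by measurable
qed simp

text \<open>Such an \<open>h\<close> factors through the finitely many order patterns of \<open>B\<close> and \<open>t\<close>.\<close>
lemma measurable_order_pattern:
  fixes X :: "'a \<Rightarrow> 'i \<Rightarrow> real"
  assumes B: "finite B" and X [measurable]: "\<And>v. (\<lambda>x. X x v) \<in> borel_measurable M"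
    and h: "\<And>C C'. \<forall>u\<in>B. \<forall>v\<in>B. C u \<le> C v \<longleftrightarrow> C' u \<le> C' v \<Longrightarrow> \<forall>v\<in>B. C v \<le> t \<longleftrightarrow> C' v \<le> t
      \<Longrightarrow> h C = h C'"
  shows "(\<lambda>x. h (X x)) \<in> measurable M (count_space UNIV)"
proof -
  define pattern where "pattern C = ({(u, v) \<in> B \<times> B. C u \<le> C v}, {v \<in> B. C v \<le> t})"
    for C :: "'i \<Rightarrow> real"
  define H where "H z = h (SOME C. pattern C = z)" for z
  have h_eq: "h C = H (pattern C)" for C
  proof -
    have "pattern (SOME C'. pattern C' = pattern C) = pattern C" by (rule someI[where x = C]) (rule refl)
    then have "h C = h (SOME C'. pattern C' = pattern C)"
      by (intro h) (auto simp: pattern_def set_eq_iff)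
    then show ?thesis unfolding H_def .
  qed
  let ?Z = "Pow (B \<times> B) \<times> Pow B"
  have countable: "countable ?Z" using B by (intro countable_finite) simp
  have pattern_measurable: "(\<lambda>x. pattern (X x)) \<in> measurable M (count_space ?Z)"
    unfolding measurable_count_space_eq_countable[OF countable]
  proof (intro conjI ballI)
    show "(\<lambda>x. pattern (X x)) \<in> space M \<rightarrow> ?Z" by (auto simp: pattern_def)
    fix z assume "z \<in> ?Z"
    then obtain P Q where z: "z = (P, Q)" "P \<subseteq> B \<times> B" "Q \<subseteq> B" by auto
    have "pattern C = z \<longleftrightarrow> (\<forall>u\<in>B. \<forall>v\<in>B. C u \<le> C v \<longleftrightarrow> (u, v) \<in> P) \<and> (\<forall>v\<in>B. C v \<le> t \<longleftrightarrow> v \<in> Q)"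
      for C using z by (auto simp: pattern_def set_eq_iff)
    then have "(\<lambda>x. pattern (X x)) -` {z} \<inter> space M =
      {x \<in> space M. (\<forall>u\<in>B. \<forall>v\<in>B. X x u \<le> X x v \<longleftrightarrow> (u, v) \<in> P) \<and> (\<forall>v\<in>B. X x v \<le> t \<longleftrightarrow> v \<in> Q)}"
      by blast
    also have "\<dots> \<in> sets M" using B by measurable
    finally show "(\<lambda>x. pattern (X x)) -` {z} \<inter> space M \<in> sets M" .
  qed
  have "(\<lambda>x. H (pattern (X x))) \<in> measurable M (count_space UNIV)"
    by (rule measurable_compose_countable'[OF _ pattern_measurable countable, where f="\<lambda>z x. H z"]) simp
  then show ?thesis unfolding h_eq .
qed

lemma insort_key_cong_order:
  "\<forall>y\<in>set ys. C x \<le> C y \<longleftrightarrow> C' x \<le> C' y \<Longrightarrow> insort_key C x ys = insort_key C' x ys"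
  by (induction ys) auto

lemma sort_key_cong_order:
  "\<forall>x\<in>set xs. \<forall>y\<in>set xs. C x \<le> C y \<longleftrightarrow> C' x \<le> C' y \<Longrightarrow> sort_key C xs = sort_key C' xs"
  by (induction xs) (simp_all add: insort_key_cong_order)

lemma space_golf_measure:
  "\<omega> \<in> space (golf_measure a b p) \<Longrightarrow> v \<notin> {a..b} \<Longrightarrow> fst \<omega> v = undefined \<and> snd \<omega> v = undefined"
  unfolding golf_measure_def by (auto simp: space_pair_measure space_PiM PiE_def extensional_def)

lemma measurable_golf_clock [measurable]:
  "(\<lambda>\<omega>. fst \<omega> v) \<in> borel_measurable (golf_measure a b p)"
proof (cases "v \<in> {a..b}")
  case True
  then show ?thesis unfolding golf_measure_def by measurable
next
  case False
  then show ?thesis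
    by (subst measurable_cong[where g="\<lambda>_. undefined"]) (auto dest: space_golf_measure)
qed

lemma measurable_golf_step [measurable]:
  "(\<lambda>\<omega>. snd \<omega> v n) \<in> measurable (golf_measure a b p) (count_space UNIV)"
proof (cases "v \<in> {a..b}")
  case True
  let ?Q = "PiM (UNIV :: nat set) (\<lambda>_. measure_pmf (bernoulli_pmf p))"
  have "(\<lambda>\<omega>. snd \<omega> v) \<in> measurable (golf_measure a b p) ?Q"
    using True unfolding golf_measure_def by measurable
  moreover have "(\<lambda>\<xi>. \<xi> n) \<in> measurable ?Q (count_space UNIV)"
    using measurable_component_singleton[of n UNIV "\<lambda>_. measure_pmf (bernoulli_pmf p)"]
    by (simp add: measurable_cong_sets[OF refl sets_measure_pmf_count_space])
  ultimately show ?thesis by (rule measurable_compose)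
next
  case False
  then show ?thesis
    by (subst measurable_cong[where g="\<lambda>_. undefined n"]) (auto dest: space_golf_measure)
qed

lemma measurable_golf_restricted:
  "(\<lambda>\<omega>. golf_restricted \<eta>0 a b \<omega> t) \<in> measurable (golf_measure a b p) (count_space UNIV)"
proof -
  let ?B = "{v \<in> {a..b}. \<eta>0 v = 1}"
  let ?L = "\<lambda>C. sort_key C (sorted_list_of_set {v \<in> ?B. C v \<le> t})"
  have finB: "finite ?B" by (rule finite_subset[of _ "{a..b}"]) auto
  have order_measurable [measurable]: "(\<lambda>\<omega>. ?L (fst \<omega>)) \<in> measurable (golf_measure a b p) (count_space UNIV)"
  proof (rule measurable_order_pattern[OF finB measurable_golf_clock])
    fix C C' :: "int \<Rightarrow> real"
    assume order: "\<forall>u\<in>?B. \<forall>v\<in>?B. C u \<le> C v \<longleftrightarrow> C' u \<le> C' v" and "\<forall>v\<in>?B. C v \<le> t \<longleftrightarrow> C' v \<le> t"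
    then have same_set: "{v \<in> ?B. C v \<le> t} = {v \<in> ?B. C' v \<le> t}" by auto
    have "finite {v \<in> ?B. C' v \<le> t}" by (rule finite_subset[of _ "{a..b}"]) auto
    then have "\<forall>x\<in>set (sorted_list_of_set {v \<in> ?B. C' v \<le> t}).
        \<forall>y\<in>set (sorted_list_of_set {v \<in> ?B. C' v \<le> t}). C x \<le> C y \<longleftrightarrow> C' x \<le> C' y"
      using order by simp
    then show "?L C = ?L C'" unfolding same_set by (rule sort_key_cong_order)
  qed
  have [measurable]: "Measurable.pred (golf_measure a b p) (\<lambda>\<omega>. inj_on (fst \<omega>) ?B)"
  proof (rule measurable_order_pattern[OF finB measurable_golf_clock])
    fix C C' :: "int \<Rightarrow> real"
    assume "\<forall>u\<in>?B. \<forall>v\<in>?B. C u \<le> C v \<longleftrightarrow> C' u \<le> C' v"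
    then have "C u = C v \<longleftrightarrow> C' u = C' v" if "u \<in> ?B" "v \<in> ?B" for u v
      using that by (auto simp: order.eq_iff)
    then show "inj_on C ?B = inj_on C' ?B" unfolding inj_on_def by blast
  qed
  have [measurable]: "(\<lambda>\<omega>. fold (\<lambda>v acc. Option.bind acc (ball_move a b (snd \<omega> v) v)) (?L (fst \<omega>))
      (Some (\<lambda>i. if i \<in> {a..b} then \<eta>0 i else 0))) \<in> measurable (golf_measure a b p) (count_space UNIV)"
    by (rule measurable_compose_countable[where f="\<lambda>L \<omega>. fold (\<lambda>v acc. Option.bind acc (ball_move a b (snd \<omega> v) v)) L
          (Some (\<lambda>i. if i \<in> {a..b} then \<eta>0 i else 0))", OF measurable_fold_ball_moves order_measurable])
       (rule measurable_golf_step)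
  show ?thesis unfolding golf_restricted_def Let_def by measurable
qed

section \<open>Clocks and walks almost surely\<close>

lemma AE_PiM_coordinates_distinct:
  fixes M :: "real measure"
  assumes M: "prob_space M" "sets M = sets borel" "\<And>x. emeasure M {x} = 0"
    and uv: "u \<in> I" "v \<in> I" "u \<noteq> v"
  shows "AE \<omega> in PiM I (\<lambda>_. M). \<omega> u \<noteq> \<omega> v"
proof -
  interpret M: prob_space M by (fact M(1))
  interpret J: prob_space "PiM (I - {u}) (\<lambda>_. M)" by (intro prob_space_PiM M(1))
  interpret pair_sigma_finite M "PiM (I - {u}) (\<lambda>_. M)" ..
  have [measurable_cong]: "sets M = sets borel" by (fact M(2))
  have "AE z in M \<Otimes>\<^sub>M PiM (I - {u}) (\<lambda>_. M). fst z \<noteq> snd z v"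
  proof (rule AE_pair_measure)
    show "{z \<in> space (M \<Otimes>\<^sub>M PiM (I - {u}) (\<lambda>_. M)). fst z \<noteq> snd z v} \<in> sets (M \<Otimes>\<^sub>M PiM (I - {u}) (\<lambda>_. M))"
    proof -
      have "v \<in> I - {u}" using uv by simp
      then have "(\<lambda>z. snd z v) \<in> borel_measurable (M \<Otimes>\<^sub>M PiM (I - {u}) (\<lambda>_. M))" by measurable
      then show ?thesis by measurable
    qed
    show "AE x in M. AE X in PiM (I - {u}) (\<lambda>_. M). fst (x, X) \<noteq> snd (x, X) v"
    proof (rule AE_I2)
      fix x
      have "AE y in M. x \<noteq> y" by (rule AE_I'[of "{x}"]) (auto simp: M(3))
      then have "AE X in PiM (I - {u}) (\<lambda>_. M). x \<noteq> X v"
        using uv by (intro AE_PiM_component[OF M(1)]) auto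
      then show "AE X in PiM (I - {u}) (\<lambda>_. M). fst (x, X) \<noteq> snd (x, X) v" by simp
    qed
  qed
  moreover have "(\<lambda>(x, X). X(u := x)) \<in> measurable (M \<Otimes>\<^sub>M PiM (I - {u}) (\<lambda>_. M)) (PiM I (\<lambda>_. M))"
    unfolding split_beta' by (rule measurable_fun_upd[where J = "I - {u}"]) (use uv in auto)
  moreover have "(\<lambda>\<omega>. \<omega> u) \<in> borel_measurable (PiM I (\<lambda>_. M))"
    "(\<lambda>\<omega>. \<omega> v) \<in> borel_measurable (PiM I (\<lambda>_. M))"
    using uv by measurable
  then have "{\<omega> \<in> space (PiM I (\<lambda>_. M)). \<omega> u \<noteq> \<omega> v} \<in> sets (PiM I (\<lambda>_. M))"
    by (rule borel_measurable_neq)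
  ultimately have ae_distr: "AE \<omega> in distr (M \<Otimes>\<^sub>M PiM (I - {u}) (\<lambda>_. M)) (PiM I (\<lambda>_. M))
      (\<lambda>(x, X). X(u := x)). \<omega> u \<noteq> \<omega> v"
    using uv by (subst AE_distr_iff) (auto simp: split_beta)
  have "insert u (I - {u}) = I" using uv by auto
  then have merge_eq: "distr (M \<Otimes>\<^sub>M PiM (I - {u}) (\<lambda>_. M)) (PiM I (\<lambda>_. M)) (\<lambda>(x, X). X(u := x)) = PiM I (\<lambda>_. M)"
    using distr_pair_PiM_eq_PiM[of "I - {u}" "\<lambda>_. M" u] M(1) by simp
  from ae_distr show ?thesis unfolding merge_eq .
qed

lemma AE_PiM_inj_on:
  fixes M :: "real measure"
  assumes M: "prob_space M" "sets M = sets borel" "\<And>x. emeasure M {x} = 0"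
    and B: "finite B" "B \<subseteq> I"
  shows "AE \<omega> in PiM I (\<lambda>_. M). inj_on \<omega> B"
proof -
  have "AE \<omega> in PiM I (\<lambda>_. M). \<forall>u\<in>B. \<forall>v\<in>B. u \<noteq> v \<longrightarrow> \<omega> u \<noteq> \<omega> v"
  proof (intro AE_finite_allI B(1))
    fix u v assume "u \<in> B" "v \<in> B"
    then show "AE \<omega> in PiM I (\<lambda>_. M). u \<noteq> v \<longrightarrow> \<omega> u \<noteq> \<omega> v"
      using AE_PiM_coordinates_distinct[OF M, of u I v] B(2) by (cases "u = v") auto
  qed
  then show ?thesis by eventually_elim (auto simp: inj_on_def)
qed

lemma (in product_prob_space) indep_vars_PiM_coordinates:
  assumes "I \<noteq> {}"
  shows "prob_space.indep_vars (PiM I M) M (\<lambda>i \<omega>. \<omega> i) I"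
proof -
  have "distr (PiM I M) (PiM I M) (\<lambda>\<omega>. restrict (\<lambda>i. \<omega> i) I) = distr (PiM I M) (PiM I M) (\<lambda>\<omega>. \<omega>)"
    by (rule distr_cong) (auto simp: space_PiM)
  also have "\<dots> = PiM I M" by (rule distr_id)
  also have "\<dots> = PiM I (\<lambda>i. distr (PiM I M) (M i) (\<lambda>\<omega>. \<omega> i))"
    by (rule PiM_cong) (simp_all add: distr_PiM_component M.prob_space_axioms)
  finally show ?thesis
    using assms by (subst P.indep_vars_iff_distr_eq_PiM') auto
qed

text \<open>Cut the sequence into consecutive blocks of length \<open>N\<close>: these are independent, and each
  one is entirely in \<open>A\<close> with probability \<open>measure M A ^ N\<close>.\<close>
lemma prob_PiM_no_aligned_run_in:
  fixes M :: "'a measure" and N n :: nat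
  assumes M: "prob_space M" and A: "A \<in> sets M"
  shows "measure (PiM UNIV (\<lambda>_. M))
      {\<xi> \<in> space (PiM UNIV (\<lambda>_. M)). \<forall>k<n. \<not> (\<forall>j\<in>{k * N..<k * N + N}. \<xi> j \<in> A)}
    = (1 - measure M A ^ N) ^ n"
proof -
  interpret product_prob_space "\<lambda>_. M" "UNIV :: nat set"
    unfolding product_prob_space_def product_prob_space_axioms_def product_sigma_finite_def
    using M prob_space_imp_sigma_finite by blast
  let ?Q = "PiM (UNIV :: nat set) (\<lambda>_. M)"
  define K where "K k = {k * N..<k * N + N}" for k
  define not_in where "not_in k = space (PiM (K k) (\<lambda>_. M)) - PiE (K k) (\<lambda>_. A)" for k
  have disj: "disjoint_family K"
    unfolding disjoint_family_on_def
  proof (intro ballI impI)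
    fix k l :: nat assume "k \<noteq> l"
    then have "k * N + N \<le> l * N \<or> l * N + N \<le> k * N"
      by (metis add.commute mult_Suc mult_le_mono1 not_less_eq_eq Suc_leI nat_neq_iff)
    then show "K k \<inter> K l = {}" unfolding K_def by auto
  qed
  have indep: "P.indep_vars (\<lambda>k. PiM (K k) (\<lambda>_. M)) (\<lambda>k \<xi>. restrict (\<lambda>i. \<xi> i) (K k)) UNIV"
    by (rule P.indep_vars_restrict[OF indep_vars_PiM_coordinates _ disj]) simp_all
  have not_in_sets: "not_in k \<in> sets (PiM (K k) (\<lambda>_. M))" for k
    unfolding not_in_def using A by (intro sets.compl_sets sets_PiM_I_finite) (auto simp: K_def)
  have preimage: "(\<lambda>\<xi>. restrict (\<lambda>i. \<xi> i) (K k)) -` not_in k \<inter> space ?Q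
      = space ?Q - {\<xi> \<in> space ?Q. \<forall>j\<in>K k. \<xi> j \<in> A}" for k
    by (auto simp: not_in_def space_PiM PiE_iff)
  have block: "P.prob {\<xi> \<in> space ?Q. \<forall>j\<in>K k. \<xi> j \<in> A} = measure M A ^ N" for k
  proof -
    have "emeasure ?Q {\<xi> \<in> space ?Q. \<forall>j\<in>K k. \<xi> j \<in> A} = (\<Prod>j\<in>K k. emeasure M A)"
      using A by (intro emeasure_PiM_Collect) (auto simp: K_def)
    then show ?thesis
      by (simp add: K_def P.emeasure_eq_measure M.emeasure_eq_measure ennreal_power)
  qed
  have block_sets: "{\<xi> \<in> space ?Q. \<forall>j\<in>K k. \<xi> j \<in> A} \<in> sets ?Q" for k
    using A unfolding K_def by measurable
  show ?thesis
  proof (cases "n = 0")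
    case True
    then show ?thesis by (simp add: P.prob_space)
  next
    case False
    have set_eq: "{\<xi> \<in> space ?Q. \<forall>k<n. \<not> (\<forall>j\<in>K k. \<xi> j \<in> A)}
        = (\<Inter>k\<in>{..<n}. (\<lambda>\<xi>. restrict (\<lambda>i. \<xi> i) (K k)) -` not_in k \<inter> space ?Q)"
      using False unfolding preimage by auto
    have "P.prob {\<xi> \<in> space ?Q. \<forall>k<n. \<not> (\<forall>j\<in>K k. \<xi> j \<in> A)}
        = (\<Prod>k\<in>{..<n}. P.prob ((\<lambda>\<xi>. restrict (\<lambda>i. \<xi> i) (K k)) -` not_in k \<inter> space ?Q))"
      unfolding set_eq by (rule P.indep_varsD[OF indep]) (use False not_in_sets in auto)
    also have "\<dots> = (1 - measure M A ^ N) ^ n"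
      unfolding preimage using block block_sets by (simp add: P.prob_compl)
    finally show ?thesis unfolding K_def .
  qed
qed

lemma AE_PiM_run_in:
  fixes M :: "'a measure" and N :: nat
  assumes M: "prob_space M" and A: "A \<in> sets M" "0 < measure M A"
  shows "AE \<xi> in PiM UNIV (\<lambda>_. M). \<exists>m. \<forall>j<N. \<xi> (m + j) \<in> A"
proof -
  let ?Q = "PiM (UNIV :: nat set) (\<lambda>_. M)"
  interpret Q: prob_space ?Q using M by (intro prob_space_PiM)
  define bad where "bad = {\<xi> \<in> space ?Q. \<not> (\<exists>m. \<forall>j<N. \<xi> (m + j) \<in> A)}"
  define no_block where "no_block n = {\<xi> \<in> space ?Q. \<forall>k<n. \<not> (\<forall>j\<in>{k * N..<k * N + N}. \<xi> j \<in> A)}"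
    for n
  have bad_sets: "bad \<in> sets ?Q" unfolding bad_def using A by measurable
  have bad_subset: "bad \<subseteq> no_block n" for n
  proof
    fix \<xi> assume "\<xi> \<in> bad"
    then have \<xi>: "\<xi> \<in> space ?Q" "\<And>m. \<not> (\<forall>j<N. \<xi> (m + j) \<in> A)" unfolding bad_def by auto
    have "\<not> (\<forall>j\<in>{k * N..<k * N + N}. \<xi> j \<in> A)" for k
    proof
      assume "\<forall>j\<in>{k * N..<k * N + N}. \<xi> j \<in> A"
      then have "\<forall>j<N. \<xi> (k * N + j) \<in> A" by simp
      with \<xi>(2) show False by blast
    qed
    with \<xi>(1) show "\<xi> \<in> no_block n" unfolding no_block_def by blast
  qed
  have le: "Q.prob bad \<le> (1 - measure M A ^ N) ^ n" for n
  proof -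
    have "no_block n \<in> sets ?Q" unfolding no_block_def using A by measurable
    then have "Q.prob bad \<le> Q.prob (no_block n)" by (rule Q.finite_measure_mono[OF bad_subset])
    also have "\<dots> = (1 - measure M A ^ N) ^ n" unfolding no_block_def by (rule prob_PiM_no_aligned_run_in[OF M A(1)])
    finally show ?thesis .
  qed
  have "0 < measure M A ^ N" "measure M A ^ N \<le> 1"
    using A(2) prob_space.prob_le_1[OF M] by (simp_all add: power_le_one)
  then have "(\<lambda>n. (1 - measure M A ^ N) ^ n) \<longlonglongrightarrow> 0" by (intro LIMSEQ_power_zero) simp
  then have "Q.prob bad \<le> 0" by (rule LIMSEQ_le_const) (use le in blast)
  then have "emeasure ?Q bad = 0" by (simp add: Q.emeasure_eq_measure measure_le_0_iff)
  then show ?thesis by (subst AE_iff_measurable[OF bad_sets]) (auto simp: bad_def)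
qed

lemma (in prob_space) distr_pair_snd:
  assumes "sigma_finite_measure N"
  shows "distr (M \<Otimes>\<^sub>M N) N snd = N"
proof (intro measure_eqI)
  interpret N: sigma_finite_measure N by fact
  fix A assume A: "A \<in> sets (distr (M \<Otimes>\<^sub>M N) N snd)"
  then have "emeasure (distr (M \<Otimes>\<^sub>M N) N snd) A = emeasure (M \<Otimes>\<^sub>M N) (space M \<times> A)"
    by (auto simp: emeasure_distr space_pair_measure dest: sets.sets_into_space
        intro!: arg_cong2[where f = emeasure])
  with A show "emeasure (distr (M \<Otimes>\<^sub>M N) N snd) A = emeasure N A"
    by (simp add: N.emeasure_pair_measure_Times emeasure_space_1)
qed simp

lemma emeasure_uniform_01_singleton: "emeasure (uniform_measure lborel {0..1::real}) {x} = 0"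
proof -
  have "emeasure lborel ({0..1} \<inter> {x}) \<le> emeasure lborel {x}" by (rule emeasure_mono) auto
  then show ?thesis by (subst emeasure_uniform_measure) auto
qed

lemma AE_golf_clocks_inj_on:
  assumes "B \<subseteq> {a..b}"
  shows "AE \<omega> in golf_measure a b p. inj_on (fst \<omega>) B"
proof -
  let ?U = "uniform_measure lborel {0..1::real}"
  let ?Q = "PiM (UNIV :: nat set) (\<lambda>_. measure_pmf (bernoulli_pmf p))"
  have U: "prob_space ?U" by (rule prob_space_uniform_measure) auto
  interpret Q: prob_space "PiM {a..b} (\<lambda>_. ?Q)"
    by (intro prob_space_PiM prob_space_PiM prob_space_measure_pmf)
  have "AE C in PiM {a..b} (\<lambda>_. ?U). inj_on C B"
    using assms finite_subset[OF assms]
    by (intro AE_PiM_inj_on[OF U _ emeasure_uniform_01_singleton]) auto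
  then have "AE C in distr (golf_measure a b p) (PiM {a..b} (\<lambda>_. ?U)) fst. inj_on C B"
    unfolding golf_measure_def Q.distr_pair_fst .
  then show ?thesis unfolding golf_measure_def by (rule AE_distrD[OF measurable_fst])
qed

lemma AE_golf_walks_reach_end:
  assumes p: "0 \<le> p" "p \<le> 1" and ab: "a < b"
  shows "AE \<omega> in golf_measure a b p. \<forall>v\<in>{a..b}. \<exists>n. walk a b (snd \<omega> v) v n \<in> {a, b}"
proof -
  let ?U = "uniform_measure lborel {0..1::real}"
  let ?Q = "PiM (UNIV :: nat set) (\<lambda>_. measure_pmf (bernoulli_pmf p))"
  interpret U: prob_space "PiM {a..b} (\<lambda>_. ?U)"
    by (intro prob_space_PiM prob_space_uniform_measure) auto
  have Q: "prob_space ?Q" by (intro prob_space_PiM prob_space_measure_pmf)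
  interpret Q': prob_space "PiM {a..b} (\<lambda>_. ?Q)" using Q by (rule prob_space_PiM)
  define c where "c = (0 < p)"
  have "0 < pmf (bernoulli_pmf p) c" using p unfolding c_def by (cases "p = 0") auto
  then have "AE \<xi> in ?Q. \<exists>m. \<forall>j<nat (b - a). \<xi> (m + j) \<in> {c}"
    by (intro AE_PiM_run_in) (simp_all add: measure_pmf.prob_space_axioms measure_pmf_single)
  then have "AE \<xi> in ?Q. has_run (nat (b - a)) c \<xi>" by (simp add: has_run_def)
  then have "AE W in PiM {a..b} (\<lambda>_. ?Q). \<forall>v\<in>{a..b}. has_run (nat (b - a)) c (W v)"
    by (intro AE_finite_allI AE_PiM_component[OF Q]) auto
  then have "AE W in PiM {a..b} (\<lambda>_. ?Q). \<forall>v\<in>{a..b}. \<exists>n. walk a b (W v) v n \<in> {a, b}"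
    by eventually_elim (use walk_reaches_end[OF ab] in blast)
  then have "AE W in distr (golf_measure a b p) (PiM {a..b} (\<lambda>_. ?Q)) snd.
      \<forall>v\<in>{a..b}. \<exists>n. walk a b (W v) v n \<in> {a, b}"
    unfolding golf_measure_def U.distr_pair_snd[OF Q'.sigma_finite_measure_axioms] .
  then show ?thesis unfolding golf_measure_def by (rule AE_distrD[OF measurable_snd])
qed

theorem mainTheorem18:
  fixes \<eta>0 :: "int \<Rightarrow> int" and s1 s2 :: int and p :: real
  assumes "\<forall>i. \<eta>0 i \<in> {-1, 0, 1}"
    and "0 \<le> p" and "p \<le> 1"
    and "separator \<eta>0 s1" and "separator \<eta>0 s2" and "s1 < s2"
    and "\<forall>v. s1 < v \<and> v < s2 \<longrightarrow> \<not> separator \<eta>0 v"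
  shows "golf_valid \<eta>0 s1 s2 p
    \<and> (AE \<omega> in golf_measure s1 s2 p.
         \<exists>\<eta>. golf_restricted \<eta>0 s1 s2 \<omega> 1 = Some \<eta> \<and> \<eta> s1 = -1 \<and> \<eta> s2 = -1)"
proof -
  note vals = assms(1) and sep = assms(4,5) and ab = assms(6)
  have "AE \<omega> in golf_measure s1 s2 p. inj_on (fst \<omega>) {v \<in> {s1..s2}. \<eta>0 v = 1}"
    by (rule AE_golf_clocks_inj_on) auto
  then have good: "AE \<omega> in golf_measure s1 s2 p.
      \<forall>t. \<exists>y. golf_restricted \<eta>0 s1 s2 \<omega> t = Some y \<and> end_separated s1 s2 y"
    using AE_golf_walks_reach_end[OF assms(2,3) ab]
    by eventually_elim (use golf_restricted_end_separated[OF vals sep ab] in blast)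
  have "AE \<omega> in golf_measure s1 s2 p. \<forall>t\<in>{0..1}. golf_restricted \<eta>0 s1 s2 \<omega> t \<noteq> None"
    using good by eventually_elim force
  moreover have "(\<lambda>\<omega>. map_option (\<lambda>\<eta>. \<eta> i) (golf_restricted \<eta>0 s1 s2 \<omega> t))
      \<in> measurable (golf_measure s1 s2 p) (count_space UNIV)" for i t
    by (rule measurable_compose[OF measurable_golf_restricted measurable_count_space])
  moreover have "AE \<omega> in golf_measure s1 s2 p.
      \<exists>\<eta>. golf_restricted \<eta>0 s1 s2 \<omega> 1 = Some \<eta> \<and> \<eta> s1 = -1 \<and> \<eta> s2 = -1"
    using good by eventually_elim (fastforce simp: end_separated_def)
  ultimately show ?thesis unfolding golf_valid_def using cadlag_golf_restricted by blast
qed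

end
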